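(* Let $H\subseteq G$ be finite simple graphs ($H$ a subgraph of $G$). Then $\nu_*(H)\le\nu_*(G)$, and if moreover $V(H)=V(G)$, then $\nu^*(H)\le\nu^*(G)$.
   Context: For a finite simple graph $G=(V,E)$ with $\ell=|V|+|E|$, a construction sequence (c-sequence) is a bijection $x:\{1,\dots,\ell\}\to V\sqcup E$ such that every edge $e=uw$ satisfies $x^{-1}(e)>\max\{x^{-1}(u),x^{-1}(w)\}$. The cost of $x$ is $\nu(x)=\sum_{e=uw\in E}\big(2x^{-1}(e)-x^{-1}(u)-x^{-1}(w)\big)$; $\nu^*(G)$ and $\nu_*(G)$ are the maximum and minimum of $\nu(x)$ over all c-sequences for $G$. *)

theory Defs
  imports Main
begin

definition simple_graph :: "'a set \<Rightarrow> 'a set set \<Rightarrow> bool" where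
  "simple_graph V E \<longleftrightarrow> finite V \<and>
     (\<forall>e\<in>E. \<exists>u w. e = {u, w} \<and> u \<noteq> w \<and> u \<in> V \<and> w \<in> V)"

definition elems :: "'a set \<Rightarrow> 'a set set \<Rightarrow> ('a + 'a set) set" where
  "elems V E = Inl ` V \<union> Inr ` E"

definition glen :: "'a set \<Rightarrow> 'a set set \<Rightarrow> nat" where
  "glen V E = card V + card E"

definition pos :: "'a set \<Rightarrow> 'a set set \<Rightarrow> (nat \<Rightarrow> 'a + 'a set) \<Rightarrow> ('a + 'a set) \<Rightarrow> nat" where
  "pos V E x a = inv_into {1..glen V E} x a"

definition cseq :: "'a set \<Rightarrow> 'a set set \<Rightarrow> (nat \<Rightarrow> 'a + 'a set) \<Rightarrow> bool" where
  "cseq V E x \<longleftrightarrow> bij_betw x {1..glen V E} (elems V E) \<and>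
     (\<forall>e\<in>E. \<forall>v\<in>e. pos V E x (Inl v) < pos V E x (Inr e))"

definition cost :: "'a set \<Rightarrow> 'a set set \<Rightarrow> (nat \<Rightarrow> 'a + 'a set) \<Rightarrow> int" where
  "cost V E x = (\<Sum>e\<in>E. 2 * int (pos V E x (Inr e)) - (\<Sum>v\<in>e. int (pos V E x (Inl v))))"

definition nu_max :: "'a set \<Rightarrow> 'a set set \<Rightarrow> int" where
  "nu_max V E = Max (cost V E ` {x. cseq V E x})"

definition nu_min :: "'a set \<Rightarrow> 'a set set \<Rightarrow> int" where
  "nu_min V E = Min (cost V E ` {x. cseq V E x})"

end

theory Submission
  imports Defs
begin

text \<open>
  For the minimum, take an optimal c-sequence of \<open>G\<close> and keep only the elements of \<open>H\<close>, in the
  same relative order. Re-indexing by rank closes the gaps left by the removed elements, so the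
  distance between an edge and each of its end vertices can only shrink, and the edges of
  \<open>G\<close> outside \<open>H\<close> contributed nonnegative terms anyway.
  For the maximum, take an optimal c-sequence of \<open>H\<close>, which already lists all vertices of \<open>G\<close>,
  and append the missing edges at the end: the terms of the edges of \<open>H\<close> are unchanged and
  the new edges only add nonnegative terms.
\<close>

lemma Min_image_le_Min_image:
  assumes "finite (f ` A)" "finite (g ` B)" "B \<noteq> {}" "\<And>b. b \<in> B \<Longrightarrow> \<exists>a\<in>A. f a \<le> g b"
  shows "Min (f ` A) \<le> Min (g ` B)"
proof -
  obtain b where "b \<in> B" "Min (g ` B) = g b" using Min_in[OF assms(2)] assms(3) by auto
  moreover obtain a where "a \<in> A" "f a \<le> g b" using assms(4)[OF \<open>b \<in> B\<close>] by blast
  ultimately show ?thesis using Min_le[OF assms(1)] by (metis image_eqI order.trans)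
qed

lemma Max_image_le_Max_image:
  assumes "finite (f ` A)" "finite (g ` B)" "A \<noteq> {}" "\<And>a. a \<in> A \<Longrightarrow> \<exists>b\<in>B. f a \<le> g b"
  shows "Max (f ` A) \<le> Max (g ` B)"
proof -
  obtain a where "a \<in> A" "Max (f ` A) = f a" using Max_in[OF assms(1)] assms(3) by auto
  moreover obtain b where "b \<in> B" "f a \<le> g b" using assms(4)[OF \<open>a \<in> A\<close>] by blast
  ultimately show ?thesis using Max_ge[OF assms(2)] by (metis image_eqI order.trans)
qed

lemma simple_graphD:
  assumes "simple_graph V E"
  shows "finite V" and "finite E" and "e \<in> E \<Longrightarrow> card e = 2" and "e \<in> E \<Longrightarrow> e \<subseteq> V"
proof -
  show "finite V" using assms by (simp add: simple_graph_def)
  moreover have "E \<subseteq> Pow V" using assms by (auto simp: simple_graph_def)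
  ultimately show "finite E" by (meson finite_Pow_iff finite_subset)
  assume "e \<in> E"
  then obtain u w where "e = {u, w}" "u \<noteq> w" "u \<in> V" "w \<in> V"
    using assms by (auto simp: simple_graph_def)
  then show "card e = 2" "e \<subseteq> V" by auto
qed

lemma finite_elems: "finite V \<Longrightarrow> finite E \<Longrightarrow> finite (elems V E)"
  unfolding elems_def by auto

lemma card_elems: "finite V \<Longrightarrow> finite E \<Longrightarrow> card (elems V E) = glen V E"
  unfolding elems_def glen_def by (subst card_Un_disjoint) (auto simp: card_image)

definition rank :: "'b set \<Rightarrow> ('b \<Rightarrow> nat) \<Rightarrow> 'b \<Rightarrow> nat" where
  "rank S f a = card {b \<in> S. f b \<le> f a}"

lemma rank_less:
  assumes "finite S" "b \<in> S" "f a < f b"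
  shows "rank S f a < rank S f b"
proof -
  have "{c \<in> S. f c \<le> f a} \<subseteq> {c \<in> S. f c \<le> f b}" using assms(3) by auto
  moreover have "b \<in> {c \<in> S. f c \<le> f b} - {c \<in> S. f c \<le> f a}" using assms(2,3) by simp
  ultimately show ?thesis unfolding rank_def using assms(1) by (intro psubset_card_mono) auto
qed

lemma rank_diff_le:
  assumes "finite S" "inj_on f S" "f b < f a"
  shows "int (rank S f a) - int (rank S f b) \<le> int (f a) - int (f b)"
proof -
  have split: "{c \<in> S. f c \<le> f a} = {c \<in> S. f c \<le> f b} \<union> {c \<in> S. f b < f c \<and> f c \<le> f a}"
    using assms(3) by auto
  have "rank S f a = rank S f b + card {c \<in> S. f b < f c \<and> f c \<le> f a}"
    unfolding rank_def split using assms(1) by (subst card_Un_disjoint) auto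
  moreover have "card {c \<in> S. f b < f c \<and> f c \<le> f a} \<le> card {f b<..f a}"
    by (rule card_inj_on_le[where f = f]) (auto intro: inj_on_subset[OF assms(2)])
  ultimately show ?thesis using assms(3) by simp
qed

lemma bij_betw_rank:
  assumes "finite S" "inj_on f S"
  shows "bij_betw (rank S f) S {1..card S}"
proof -
  have inj: "inj_on (rank S f) S"
  proof (rule inj_onI)
    fix a b assume "a \<in> S" "b \<in> S" "rank S f a = rank S f b"
    then show "a = b"
      using rank_less[OF assms(1), of a f b] rank_less[OF assms(1), of b f a] inj_onD[OF assms(2)]
      by (metis less_irrefl linorder_neqE_nat)
  qed
  have "rank S f ` S \<subseteq> {1..card S}"
  proof
    fix k assume "k \<in> rank S f ` S"
    then obtain a where a: "a \<in> S" "k = rank S f a" by auto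
    have "rank S f a \<ge> 1" unfolding rank_def using assms(1) a(1) by (auto simp: Suc_le_eq card_gt_0_iff)
    moreover have "rank S f a \<le> card S" unfolding rank_def using assms(1) by (intro card_mono) auto
    ultimately show "k \<in> {1..card S}" using a by auto
  qed
  moreover have "card (rank S f ` S) = card {1..card S}" using inj by (simp add: card_image)
  ultimately have "rank S f ` S = {1..card S}" by (intro card_subset_eq) auto
  with inj show ?thesis by (simp add: bij_betw_def)
qed

lemma rank_eq_initial_segment:
  assumes "finite S" "A \<subseteq> S" "inj_on f A" "f ` A = {1..n}" "\<And>b. b \<in> S - A \<Longrightarrow> n < f b"
    and "a \<in> A"
  shows "rank S f a = f a"
proof -
  let ?below = "{b \<in> A. f b \<le> f a}"
  have "f a \<le> n" using assms(4,6) by auto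
  have "f ` ?below = {k \<in> f ` A. k \<le> f a}" by blast
  also have "\<dots> = {1..f a}" using assms(4) \<open>f a \<le> n\<close> by auto
  finally have image: "f ` ?below = {1..f a}" .
  have "{b \<in> S. f b \<le> f a} = ?below"
    using assms(2,5) \<open>f a \<le> n\<close> by (meson Diff_iff leD le_less_trans subset_iff)
  moreover have "card ?below = card (f ` ?below)"
    by (rule card_image[symmetric], rule inj_on_subset[OF assms(3)]) auto
  ultimately show ?thesis unfolding rank_def image by simp
qed

lemma bij_betw_pos: "cseq V E x \<Longrightarrow> bij_betw (pos V E x) (elems V E) {1..glen V E}"
  unfolding cseq_def pos_def by (blast intro: bij_betw_inv_into)

lemma cseq_of_key:
  assumes sg: "simple_graph V E" and inj: "inj_on f (elems V E)"
    and edge_after: "\<forall>e\<in>E. \<forall>v\<in>e. f (Inl v) < f (Inr e)"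
  shows "\<exists>x. cseq V E x \<and> (\<forall>a\<in>elems V E. pos V E x a = rank (elems V E) f a)"
proof -
  let ?S = "elems V E"
  have fin: "finite ?S" using simple_graphD[OF sg] finite_elems by blast
  have "bij_betw (rank ?S f) ?S {1..glen V E}"
    using bij_betw_rank[OF fin inj] simple_graphD[OF sg] card_elems by metis
  moreover define x where "x = inv_into ?S (rank ?S f)"
  ultimately have bij: "bij_betw x {1..glen V E} ?S" and pos: "\<forall>a\<in>?S. pos V E x a = rank ?S f a"
    unfolding pos_def by (auto intro: bij_betw_inv_into inv_into_inv_into_eq)
  have "pos V E x (Inl v) < pos V E x (Inr e)" if "e \<in> E" "v \<in> e" for e v
  proof -
    have "Inl v \<in> ?S" "Inr e \<in> ?S" using that simple_graphD(4)[OF sg] by (auto simp: elems_def)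
    then show ?thesis using pos rank_less[OF fin] edge_after that by metis
  qed
  with bij pos show ?thesis unfolding cseq_def by blast
qed

lemma cseq_extend:
  assumes sg: "simple_graph V EG" and sub: "EH \<subseteq> EG" and y: "cseq V EH y"
  shows "\<exists>x. cseq V EG x \<and> (\<forall>a\<in>elems V EH. pos V EG x a = pos V EH y a)"
proof -
  let ?A = "elems V EH" and ?S = "elems V EG" and ?p = "pos V EH y" and ?L = "glen V EH"
  have fin: "finite ?S" using simple_graphD[OF sg] finite_elems by blast
  obtain g where g: "bij_betw g ?S {0..<card ?S}" using ex_bij_betw_finite_nat[OF fin] by blast
  define f where "f a = (if a \<in> ?A then ?p a else ?L + 1 + g a)" for a
  have AS: "?A \<subseteq> ?S" using sub by (auto simp: elems_def)
  have p: "bij_betw ?p ?A {1..?L}" using bij_betw_pos[OF y] .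
  have f_A: "f ` ?A = {1..?L}" and f_out: "\<And>b. b \<notin> ?A \<Longrightarrow> ?L < f b"
    using p by (auto simp: f_def bij_betw_def)
  have f_le: "f c \<le> ?L" if "c \<in> ?A" for c using f_A that by auto
  have inj: "inj_on f ?S"
  proof (rule inj_onI)
    fix a b assume ab: "a \<in> ?S" "b \<in> ?S" "f a = f b"
    have "inj_on f ?A" using p by (simp add: f_def bij_betw_def inj_on_def)
    moreover have "inj_on f (?S - ?A)" using g by (simp add: f_def bij_betw_def inj_on_def)
    ultimately show "a = b" using ab f_le f_out by (metis Diff_iff inj_onD not_less)
  qed
  have "f (Inl v) < f (Inr e)" if "e \<in> EG" "v \<in> e" for e v
  proof -
    have v: "Inl v \<in> ?A" using that simple_graphD(4)[OF sg] by (auto simp: elems_def)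
    show ?thesis
    proof (cases "e \<in> EH")
      case True
      then show ?thesis using v y that by (auto simp: f_def cseq_def elems_def)
    next
      case False
      then have "Inr e \<notin> ?A" by (auto simp: elems_def)
      then show ?thesis using f_le[OF v] f_out by (meson le_less_trans)
    qed
  qed
  then obtain x where x: "cseq V EG x" and pos: "\<forall>a\<in>?S. pos V EG x a = rank ?S f a"
    using cseq_of_key[OF sg inj] by blast
  have "rank ?S f a = f a" if "a \<in> ?A" for a
    using rank_eq_initial_segment[OF fin AS inj_on_subset[OF inj AS] f_A _ that] f_out by blast
  then have "pos V EG x a = ?p a" if "a \<in> ?A" for a
    using pos AS that by (auto simp: f_def)
  with x show ?thesis by blast
qed

lemma cseq_exists:
  assumes sg: "simple_graph V E"
  shows "\<exists>x. cseq V E x"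
proof -
  have "finite (elems V {})" using simple_graphD(1)[OF sg] by (simp add: finite_elems)
  then obtain h where "bij_betw h {1..card (elems V {})} (elems V {})"
    using ex_bij_betw_nat_finite_1 by blast
  then have "cseq V {} h" using simple_graphD(1)[OF sg] by (simp add: cseq_def card_elems)
  from cseq_extend[OF sg empty_subsetI this] show ?thesis by blast
qed

definition edge_cost :: "'a set \<Rightarrow> 'a set set \<Rightarrow> (nat \<Rightarrow> 'a + 'a set) \<Rightarrow> 'a set \<Rightarrow> int" where
  "edge_cost V E x e = (\<Sum>v\<in>e. int (pos V E x (Inr e)) - int (pos V E x (Inl v)))"

lemma cost_eq_sum_edge_cost:
  assumes "simple_graph V E"
  shows "cost V E x = (\<Sum>e\<in>E. edge_cost V E x e)"
  unfolding cost_def edge_cost_def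
  using simple_graphD(3)[OF assms] by (intro sum.cong) (simp_all add: sum_subtractf)

lemma edge_cost_nonneg: "cseq V E x \<Longrightarrow> e \<in> E \<Longrightarrow> 0 \<le> edge_cost V E x e"
  unfolding edge_cost_def cseq_def by (intro sum_nonneg) force

lemma edge_cost_le:
  assumes sg: "simple_graph V E" and x: "cseq V E x" and e: "e \<in> E"
  shows "edge_cost V E x e \<le> 2 * int (glen V E)"
proof -
  have "Inr e \<in> elems V E" using e by (simp add: elems_def)
  then have "pos V E x (Inr e) \<le> glen V E" using bij_betw_apply[OF bij_betw_pos[OF x]] by auto
  then have "edge_cost V E x e \<le> (\<Sum>v\<in>e. int (glen V E))"
    unfolding edge_cost_def by (intro sum_mono) simp
  then show ?thesis using simple_graphD(3)[OF sg e] by simp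
qed

lemma finite_costs:
  assumes sg: "simple_graph V E"
  shows "finite (cost V E ` {x. cseq V E x})"
proof (rule finite_subset)
  show "cost V E ` {x. cseq V E x} \<subseteq> {0 .. int (card E) * (2 * int (glen V E))}"
  proof
    fix c assume "c \<in> cost V E ` {x. cseq V E x}"
    then obtain x where x: "cseq V E x" and c: "c = (\<Sum>e\<in>E. edge_cost V E x e)"
      using cost_eq_sum_edge_cost[OF sg] by auto
    have "0 \<le> c" unfolding c using edge_cost_nonneg[OF x] by (simp add: sum_nonneg)
    moreover have "c \<le> (\<Sum>e\<in>E. 2 * int (glen V E))"
      unfolding c using edge_cost_le[OF sg x] by (intro sum_mono)
    ultimately show "c \<in> {0 .. int (card E) * (2 * int (glen V E))}" by simp
  qed
qed simp

lemma cost_le_if_edge_cost_le: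
  assumes sgH: "simple_graph VH EH" and sgG: "simple_graph VG EG" and sub: "EH \<subseteq> EG"
    and x: "cseq VG EG x" and le: "\<And>e. e \<in> EH \<Longrightarrow> edge_cost VH EH y e \<le> edge_cost VG EG x e"
  shows "cost VH EH y \<le> cost VG EG x"
proof -
  have "cost VH EH y \<le> (\<Sum>e\<in>EH. edge_cost VG EG x e)"
    unfolding cost_eq_sum_edge_cost[OF sgH] using le by (rule sum_mono)
  also have "\<dots> \<le> (\<Sum>e\<in>EG. edge_cost VG EG x e)"
    using sub edge_cost_nonneg[OF x] simple_graphD(2)[OF sgG] by (intro sum_mono2) auto
  finally show ?thesis unfolding cost_eq_sum_edge_cost[OF sgG] .
qed

lemma cseq_restrict_cost_le:
  assumes sgG: "simple_graph VG EG" and sgH: "simple_graph VH EH"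
    and sub: "VH \<subseteq> VG" "EH \<subseteq> EG" and x: "cseq VG EG x"
  shows "\<exists>y. cseq VH EH y \<and> cost VH EH y \<le> cost VG EG x"
proof -
  let ?f = "pos VG EG x" and ?S = "elems VH EH"
  have fin: "finite ?S" using simple_graphD[OF sgH] finite_elems by blast
  have "?S \<subseteq> elems VG EG" using sub by (auto simp: elems_def)
  then have inj: "inj_on ?f ?S" using bij_betw_pos[OF x] by (auto simp: bij_betw_def intro: inj_on_subset)
  have edge_after: "\<forall>e\<in>EH. \<forall>v\<in>e. ?f (Inl v) < ?f (Inr e)" using x sub unfolding cseq_def by blast
  obtain y where y: "cseq VH EH y" and pos: "\<forall>a\<in>?S. pos VH EH y a = rank ?S ?f a"
    using cseq_of_key[OF sgH inj edge_after] by blast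
  have "edge_cost VH EH y e \<le> edge_cost VG EG x e" if e: "e \<in> EH" for e
    unfolding edge_cost_def
  proof (rule sum_mono)
    fix v assume "v \<in> e"
    moreover have "Inl v \<in> ?S" "Inr e \<in> ?S"
      using e \<open>v \<in> e\<close> simple_graphD(4)[OF sgH e] by (auto simp: elems_def)
    ultimately show "int (pos VH EH y (Inr e)) - int (pos VH EH y (Inl v)) \<le> int (?f (Inr e)) - int (?f (Inl v))"
      using rank_diff_le[OF fin inj] edge_after e pos by simp
  qed
  with cost_le_if_edge_cost_le[OF sgH sgG sub(2) x] y show ?thesis by blast
qed

lemma cseq_extend_cost_ge:
  assumes sgG: "simple_graph V EG" and sgH: "simple_graph V EH"
    and sub: "EH \<subseteq> EG" and y: "cseq V EH y"
  shows "\<exists>x. cseq V EG x \<and> cost V EH y \<le> cost V EG x"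
proof -
  obtain x where x: "cseq V EG x" and pos: "\<forall>a\<in>elems V EH. pos V EG x a = pos V EH y a"
    using cseq_extend[OF sgG sub y] by blast
  have "edge_cost V EH y e = edge_cost V EG x e" if "e \<in> EH" for e
    unfolding edge_cost_def using that pos simple_graphD(4)[OF sgH that]
    by (intro sum.cong) (auto simp: elems_def)
  with cost_le_if_edge_cost_le[OF sgH sgG sub x] x show ?thesis by auto
qed

theorem lemma6:
  fixes VG VH :: "'a set" and EG EH :: "'a set set"
  assumes "simple_graph VG EG" and "simple_graph VH EH"
    and "VH \<subseteq> VG" and "EH \<subseteq> EG"
  shows "nu_min VH EH \<le> nu_min VG EG \<and> (VH = VG \<longrightarrow> nu_max VH EH \<le> nu_max VG EG)"
proof
  show "nu_min VH EH \<le> nu_min VG EG"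
    unfolding nu_min_def
    using finite_costs cseq_exists cseq_restrict_cost_le[OF assms] assms(1,2)
    by (intro Min_image_le_Min_image) auto
  show "VH = VG \<longrightarrow> nu_max VH EH \<le> nu_max VG EG"
    unfolding nu_max_def
    using finite_costs cseq_exists cseq_extend_cost_ge[OF assms(1) _ assms(4)] assms(1,2)
    by (intro impI Max_image_le_Max_image) auto
qed

end
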